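(* Let $g$ be an element of $A$ or of $B$ with $g\notin H$. Then there exists an integer $t_0>1$ such that for every positive integer $t$ divisible by $t_0$, $g\rho_t\notin H\rho_t$.
   Context: Fix integers $m,n>1$ and let $G_{mn}=\langle a,b;\ [a^m,b^n]=1\rangle$. Put $c=a^m$, $d=b^n$, $H=\langle c,d\rangle$ (free abelian with basis $c,d$), $A=\langle a,H\rangle$, $B=\langle b,H\rangle$. For an integer $t>1$ let $G_{mn}(t)=\langle a,b;\ [a^m,b^n]=1,\ a^{mt}=b^{nt}=1\rangle$ and let $\rho_t:G_{mn}\to G_{mn}(t)$ be the natural homomorphism. *)

theory Defs
  imports Main
begin

text \<open>Groups given by generators a, b and relators, modelled concretely:
  elements are words in a, b and their inverses; two words represent the same
  element iff they are related by the congruence generated by free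
  cancellation and insertion/deletion of relators.\<close>

datatype gen = GA | GB

type_synonym letter = "gen \<times> bool"   (* (generator, inverted?) *)
type_synonym word = "letter list"

definition inv_letter :: "letter \<Rightarrow> letter" where
  "inv_letter x = (fst x, \<not> snd x)"

definition inv_word :: "word \<Rightarrow> word" where
  "inv_word w = rev (map inv_letter w)"

definition wa :: word where "wa = [(GA, False)]"
definition wb :: word where "wb = [(GB, False)]"

definition wpow :: "word \<Rightarrow> nat \<Rightarrow> word" where
  "wpow w k = concat (replicate k w)"

definition wcomm :: "word \<Rightarrow> word \<Rightarrow> word" where
  "wcomm u v = inv_word u @ inv_word v @ u @ v"

inductive word_eq :: "word set \<Rightarrow> word \<Rightarrow> word \<Rightarrow> bool" for R where
  refl: "word_eq R u u"
| sym: "word_eq R u v \<Longrightarrow> word_eq R v u"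
| trans: "word_eq R u v \<Longrightarrow> word_eq R v w \<Longrightarrow> word_eq R u w"
| cancel: "word_eq R (u @ [x, inv_letter x] @ v) (u @ v)"
| relator: "r \<in> R \<Longrightarrow> word_eq R (u @ r @ v) (u @ v)"

definition in_subgroup :: "word set \<Rightarrow> word set \<Rightarrow> word \<Rightarrow> bool" where
  "in_subgroup R S w \<longleftrightarrow>
     (\<exists>ws. set ws \<subseteq> S \<union> inv_word ` S \<and> word_eq R w (concat ws))"

definition wc :: "nat \<Rightarrow> word" where "wc m = wpow wa m"
definition wd :: "nat \<Rightarrow> word" where "wd n = wpow wb n"

definition rels_G :: "nat \<Rightarrow> nat \<Rightarrow> word set" where
  "rels_G m n = {wcomm (wc m) (wd n)}"

definition rels_Gt :: "nat \<Rightarrow> nat \<Rightarrow> nat \<Rightarrow> word set" where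
  "rels_Gt m n t = {wcomm (wc m) (wd n), wpow wa (m * t), wpow wb (n * t)}"

end

theory Submission
  imports Defs
begin

text \<open>
  By symmetry let g lie in A, which is generated by a and d because c = a^m. As c commutes with a
  and d, in G_mn we can write g = x h with h \<in> H and x = a^k_1 d^j_1 ... a^k_r, where 0 < k_i < m
  and j_i \<noteq> 0; x is nonempty as g \<notin> H. Once t exceeds every |j_i|, the group G_mn(t) acts on
  the left cosets of \<langle>b\<rangle> in the free product Z/m * Z/nt: a^m acts trivially, hence so do all
  relators. H fixes the trivial coset, while x moves it to the coset with reduced form
  a^k_1 b^(n j_1) ... a^k_r.
\<close>

lemma inv_letter_inv [simp]: "inv_letter (inv_letter x) = x"
  by (simp add: inv_letter_def)

lemma inv_word_Nil [simp]: "inv_word [] = []"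
  by (simp add: inv_word_def)

lemma inv_word_Cons [simp]: "inv_word (x # u) = inv_word u @ [inv_letter x]"
  by (simp add: inv_word_def)

lemma inv_word_append [simp]: "inv_word (u @ v) = inv_word v @ inv_word u"
  by (simp add: inv_word_def)

lemma inv_word_inv_word [simp]: "inv_word (inv_word u) = u"
  by (induct u) auto

lemma wpow_0 [simp]: "wpow w 0 = []"
  by (simp add: wpow_def)

lemma wpow_one [simp]: "wpow w (Suc 0) = w"
  by (simp add: wpow_def)

lemma wpow_Suc: "wpow w (Suc k) = w @ wpow w k"
  by (simp add: wpow_def)

lemma wpow_Suc_right: "wpow w (Suc k) = wpow w k @ w"
  by (induct k) (auto simp: wpow_Suc)

lemma wpow_add: "wpow w (i + j) = wpow w i @ wpow w j"
  by (simp add: wpow_def replicate_add)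

lemma wpow_mult: "wpow w (i * j) = wpow (wpow w i) j"
  by (induct j) (auto simp: wpow_Suc wpow_add)

lemma wpow_single [simp]: "wpow [x] k = replicate k x"
  by (induct k) (auto simp: wpow_Suc)

lemma inv_word_wpow: "inv_word (wpow w k) = wpow (inv_word w) k"
  by (induct k) (simp_all add: wpow_Suc flip: wpow_Suc_right)

declare word_eq.trans [trans]

lemma word_eq_append_cong: "word_eq R u v \<Longrightarrow> word_eq R (x @ u @ y) (x @ v @ y)"
proof (induct rule: word_eq.induct)
  case (cancel u a v)
  then show ?case using word_eq.cancel[of R "x @ u" a "v @ y"] by simp
next
  case (relator r u v)
  then show ?case using word_eq.relator[of r R "x @ u" "v @ y"] by simp
qed (auto intro: word_eq.intros)

lemma word_eq_mono: "word_eq R u v \<Longrightarrow> R \<subseteq> R' \<Longrightarrow> word_eq R' u v"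
proof (induct rule: word_eq.induct)
  case (cancel u x v)
  then show ?case using word_eq.cancel[of R' u x v] by simp
next
  case (relator r u v)
  then show ?case using word_eq.relator[of r R' u v] by auto
qed (auto intro: word_eq.intros)

lemma word_eq_inv_right: "word_eq R (u @ inv_word u) []"
proof (induct u)
  case (Cons x u)
  have "word_eq R ([x] @ (u @ inv_word u) @ [inv_letter x]) ([x] @ [] @ [inv_letter x])"
    using Cons by (rule word_eq_append_cong)
  then show ?case
    using word_eq.cancel[of R "[]" x "[]"] by (auto intro: word_eq.trans)
qed (simp add: word_eq.refl)

lemma word_eq_cancel_right: "word_eq R (x @ u @ inv_word u @ y) (x @ y)"
  using word_eq_append_cong[OF word_eq_inv_right[of R u], of x y] by simp

lemma word_eq_cancel_left: "word_eq R (x @ inv_word u @ u @ y) (x @ y)"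
  using word_eq_cancel_right[of R x "inv_word u" y] by simp

definition commutes :: "word set \<Rightarrow> word \<Rightarrow> word \<Rightarrow> bool" where
  "commutes R u v \<longleftrightarrow> word_eq R (u @ v) (v @ u)"

lemma commutes_sym: "commutes R u v \<Longrightarrow> commutes R v u"
  unfolding commutes_def by (rule word_eq.sym)

lemma commutes_Nil: "commutes R u []"
  by (simp add: commutes_def word_eq.refl)

lemma commutes_append: "commutes R u v \<Longrightarrow> commutes R u v' \<Longrightarrow> commutes R u (v @ v')"
  unfolding commutes_def
  using word_eq_append_cong[of R "u @ v" "v @ u" "[]" v'] word_eq_append_cong[of R "u @ v'" "v' @ u" v "[]"]
  by (auto intro: word_eq.trans)

lemma commutes_concat: "(\<And>v. v \<in> set vs \<Longrightarrow> commutes R u v) \<Longrightarrow> commutes R u (concat vs)"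
  by (induct vs) (auto simp: commutes_Nil commutes_append)

lemma commutes_wpow: "commutes R u v \<Longrightarrow> commutes R u (wpow v k)"
  by (induct k) (auto simp: wpow_Suc commutes_Nil commutes_append)

lemma commutes_inv_word: "commutes R u v \<Longrightarrow> commutes R u (inv_word v)"
proof -
  assume "commutes R u v"
  then have "word_eq R (inv_word v @ (u @ v) @ inv_word v) (inv_word v @ (v @ u) @ inv_word v)"
    unfolding commutes_def by (rule word_eq_append_cong)
  then have "word_eq R (inv_word v @ u) (u @ inv_word v)"
    using word_eq_cancel_right[of R "inv_word v @ u" v "[]"] word_eq_cancel_left[of R "[]" v "u @ inv_word v"]
    by simp (meson word_eq.sym word_eq.trans)
  then show ?thesis
    unfolding commutes_def by (rule word_eq.sym)
qed

lemma commutes_of_relator: "wcomm u v \<in> R \<Longrightarrow> commutes R u v"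
proof -
  assume "wcomm u v \<in> R"
  then have "word_eq R ((v @ u) @ wcomm u v @ []) ((v @ u) @ [])"
    by (rule word_eq.relator)
  moreover have "word_eq R (v @ u @ inv_word u @ inv_word v @ u @ v) (u @ v)"
    using word_eq_cancel_right[of R v u "inv_word v @ u @ v"] word_eq_cancel_right[of R "[]" v "u @ v"]
    by (auto intro: word_eq.trans)
  ultimately show ?thesis
    unfolding commutes_def wcomm_def by simp (meson word_eq.sym word_eq.trans)
qed

definition zpow :: "word \<Rightarrow> int \<Rightarrow> word" where
  "zpow w k = (if 0 \<le> k then wpow w (nat k) else wpow (inv_word w) (nat (- k)))"

lemma zpow_0 [simp]: "zpow w 0 = []"
  by (simp add: zpow_def)

lemma zpow_uminus: "zpow w (- k) = zpow (inv_word w) k"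
  by (simp add: zpow_def)

lemma zpow_wpow: "zpow (wpow w p) k = zpow w (int p * k)"
proof (cases "0 \<le> k")
  case True
  then show ?thesis by (simp add: zpow_def nat_mult_distrib flip: wpow_mult)
next
  case False
  then have "nat (- (int p * k)) = p * nat (- k)"
    by (simp add: nat_mult_distrib flip: mult_minus_right)
  moreover have "int p * k < 0" if "0 < p"
    using False that by (simp add: mult_pos_neg)
  ultimately show ?thesis
    using False by (cases "p = 0") (simp_all add: zpow_def wpow_def[of "[]"] inv_word_wpow flip: wpow_mult)
qed

lemma word_eq_zpow_succ: "word_eq R (w @ zpow w k) (zpow w (k + 1))"
proof (cases "0 \<le> k")
  case True
  then have "nat (k + 1) = Suc (nat k)" by simp
  then show ?thesis using True by (simp add: zpow_def wpow_Suc word_eq.refl)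
next
  case False
  then have "nat (- k) = Suc (nat (- (k + 1)))" and "zpow w (k + 1) = wpow (inv_word w) (nat (- (k + 1)))"
    by (auto simp: zpow_def)
  then have "zpow w k = inv_word w @ zpow w (k + 1)"
    using False by (simp add: zpow_def wpow_Suc)
  then show ?thesis
    using word_eq_cancel_right[of R "[]" w "zpow w (k + 1)"] by simp
qed

lemma word_eq_zpow_pred: "word_eq R (inv_word w @ zpow w k) (zpow w (k - 1))"
  using word_eq_zpow_succ[of R "inv_word w" "- k"] by (simp add: zpow_uminus[symmetric])

lemma word_eq_zpow_add: "word_eq R (zpow w i @ zpow w j) (zpow w (i + j))"
proof (induct i rule: int_induct[where k = 0])
  case base
  then show ?case by (simp add: word_eq.refl)
next
  case (step1 i)
  have "word_eq R (zpow w (i + 1) @ zpow w j) (w @ zpow w i @ zpow w j)"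
    using word_eq_append_cong[OF word_eq.sym[OF word_eq_zpow_succ[of R w i]], of "[]" "zpow w j"] by simp
  also have "word_eq R \<dots> (w @ zpow w (i + j))"
    using word_eq_append_cong[OF step1(2), of w "[]"] by simp
  also have "word_eq R \<dots> (zpow w (i + 1 + j))"
    using word_eq_zpow_succ[of R w "i + j"] by (simp add: ac_simps)
  finally show ?case .
next
  case (step2 i)
  have "word_eq R (zpow w (i - 1) @ zpow w j) (inv_word w @ zpow w i @ zpow w j)"
    using word_eq_append_cong[OF word_eq.sym[OF word_eq_zpow_pred[of R w i]], of "[]" "zpow w j"] by simp
  also have "word_eq R \<dots> (inv_word w @ zpow w (i + j))"
    using word_eq_append_cong[OF step2(2), of "inv_word w" "[]"] by simp
  also have "word_eq R \<dots> (zpow w (i - 1 + j))"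
    using word_eq_zpow_pred[of R w "i + j"] by (simp add: algebra_simps)
  finally show ?case .
qed

lemma zpow_as_concat:
  obtains hs where "set hs \<subseteq> {u} \<union> inv_word ` {u}" "zpow u k = concat hs"
  by (rule that[of "replicate (nat \<bar>k\<bar>) (if 0 \<le> k then u else inv_word u)"]) (auto simp: zpow_def wpow_def)

lemma commutes_zpow: "commutes R u v \<Longrightarrow> commutes R u (zpow v k)"
  by (simp add: zpow_def commutes_wpow commutes_inv_word)

definition starts_with :: "'a \<Rightarrow> ('a \<times> int) list \<Rightarrow> bool" where
  "starts_with b y \<longleftrightarrow> y \<noteq> [] \<and> fst (hd y) = b"

definition head_split :: "'a \<Rightarrow> ('a \<times> int) list \<Rightarrow> int \<times> ('a \<times> int) list" where
  "head_split b y = (if starts_with b y then (snd (hd y), tl y) else (0, y))"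

definition cons_syllable :: "'a \<Rightarrow> int \<Rightarrow> ('a \<times> int) list \<Rightarrow> ('a \<times> int) list" where
  "cons_syllable b k y = (if k = 0 then y else (b, k) # y)"

fun reduced_syllables :: "('a \<Rightarrow> int \<Rightarrow> bool) \<Rightarrow> ('a \<Rightarrow> bool) \<Rightarrow> ('a \<times> int) list \<Rightarrow> bool" where
  "reduced_syllables ok final [] = True"
| "reduced_syllables ok final [(b, k)] \<longleftrightarrow> k \<noteq> 0 \<and> ok b k \<and> final b"
| "reduced_syllables ok final ((b, k) # (c, l) # y) \<longleftrightarrow>
     k \<noteq> 0 \<and> ok b k \<and> b \<noteq> c \<and> reduced_syllables ok final ((c, l) # y)"

lemma reduced_syllables_Cons:
  "reduced_syllables ok final ((b, k) # y) \<longleftrightarrow>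
     k \<noteq> 0 \<and> ok b k \<and> \<not> starts_with b y \<and> (y = [] \<longrightarrow> final b) \<and> reduced_syllables ok final y"
  by (cases y) (auto simp: starts_with_def)

lemma reduced_syllables_nonzero: "reduced_syllables ok final y \<Longrightarrow> (b, k) \<in> set y \<Longrightarrow> k \<noteq> 0"
  by (induct y) (auto simp: reduced_syllables_Cons)

lemma reduced_syllables_not_dvd:
  assumes "reduced_syllables ok final y" "(\<Sum>(c, e)\<leftarrow>y. nat \<bar>e\<bar>) < t" "(b, j) \<in> set y"
  shows "\<not> int t dvd j"
proof -
  have "nat \<bar>j\<bar> \<le> (\<Sum>(c, e)\<leftarrow>y. nat \<bar>e\<bar>)"
    using member_le_sum_list[of "nat \<bar>j\<bar>" "map (\<lambda>(c, e). nat \<bar>e\<bar>) y"] assms(3) by force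
  moreover have "j \<noteq> 0"
    using reduced_syllables_nonzero[OF assms(1,3)] .
  ultimately show ?thesis
    using assms(2) by (auto dest: dvd_imp_le_int)
qed

lemma reduced_syllables_head_split:
  assumes "reduced_syllables ok final y" "head_split b y = (k, r)"
  shows "y = cons_syllable b k r" "reduced_syllables ok final r" "\<not> starts_with b r"
    "k \<noteq> 0 \<Longrightarrow> ok b k \<and> (r = [] \<longrightarrow> final b)"
  using assms by (cases y; auto simp: head_split_def cons_syllable_def starts_with_def reduced_syllables_Cons
      split: if_splits)+

lemma reduced_syllables_cons_syllable:
  assumes "reduced_syllables ok final r" "\<not> starts_with b r" "k \<noteq> 0 \<Longrightarrow> ok b k \<and> (r = [] \<longrightarrow> final b)"
  shows "reduced_syllables ok final (cons_syllable b k r)"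
  using assms by (simp add: cons_syllable_def reduced_syllables_Cons)

lemma head_split_cons_syllable: "\<not> starts_with b r \<Longrightarrow> head_split b (cons_syllable b k r) = (k, r)"
  by (auto simp: head_split_def cons_syllable_def starts_with_def)

section \<open>A normal form modulo the subgroup generated by w^p and D\<close>

definition syllable_word :: "word \<Rightarrow> word \<Rightarrow> (bool \<times> int) list \<Rightarrow> word" where
  "syllable_word w D y = concat (map (\<lambda>(b, k). zpow (if b then w else D) k) y)"

lemma syllable_word_Nil [simp]: "syllable_word w D [] = []"
  by (simp add: syllable_word_def)

lemma syllable_word_cons_syllable:
  "syllable_word w D (cons_syllable b k y) = zpow (if b then w else D) k @ syllable_word w D y"
  by (simp add: syllable_word_def cons_syllable_def)

text \<open>Tag True marks a power of w and tag False a power of D; a trailing power of D belongs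
  to the subgroup part, so the last syllable is a power of w.\<close>

definition normal_syllables :: "nat \<Rightarrow> (bool \<times> int) list \<Rightarrow> bool" where
  "normal_syllables p = reduced_syllables (\<lambda>b k. b \<longrightarrow> 0 < k \<and> k < int p) (\<lambda>b. b)"

lemma commutes_syllable_word:
  assumes "commutes R (wpow w p) D"
  shows "commutes R (wpow w p) (syllable_word w D y)"
proof -
  have "commutes R (wpow w p) w"
    unfolding commutes_def by (simp add: wpow_Suc word_eq.refl flip: wpow_Suc_right)
  then show ?thesis
    using assms unfolding syllable_word_def by (auto intro!: commutes_concat commutes_zpow)
qed

lemma normal_form_step_w:
  assumes "0 < p" "commutes R (wpow w p) D" "normal_syllables p y"
  obtains y' k where "normal_syllables p y'"
    "word_eq R (zpow w e @ syllable_word w D y) (syllable_word w D y' @ zpow (wpow w p) k)"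
proof -
  obtain k r where split: "head_split True y = (k, r)" by (cases "head_split True y")
  note r = reduced_syllables_head_split[OF assms(3)[unfolded normal_syllables_def] split]
  define s where "s = e + k"
  have "zpow w e @ syllable_word w D y = zpow w e @ zpow w k @ syllable_word w D r"
    by (subst r(1)) (simp add: syllable_word_cons_syllable)
  also have "word_eq R \<dots> (zpow w s @ syllable_word w D r)"
    unfolding s_def using word_eq_append_cong[OF word_eq_zpow_add, where x="[]"] by simp
  also have "word_eq R \<dots> (zpow w (s mod int p) @ zpow (wpow w p) (s div int p) @ syllable_word w D r)"
    using word_eq_append_cong[OF word_eq.sym[OF word_eq_zpow_add[of R w "s mod int p" "int p * (s div int p)"]],
        of "[]" "syllable_word w D r"]
    by (simp add: zpow_wpow)
  also have "word_eq R \<dots> (zpow w (s mod int p) @ syllable_word w D r @ zpow (wpow w p) (s div int p))"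
  proof -
    have "commutes R (zpow (wpow w p) (s div int p)) (syllable_word w D r)"
      using commutes_zpow[OF commutes_sym[OF commutes_syllable_word[OF assms(2)]]] by (rule commutes_sym)
    then have "word_eq R (zpow w (s mod int p) @ (zpow (wpow w p) (s div int p) @ syllable_word w D r) @ [])
        (zpow w (s mod int p) @ (syllable_word w D r @ zpow (wpow w p) (s div int p)) @ [])"
      unfolding commutes_def by (rule word_eq_append_cong)
    then show ?thesis by simp
  qed
  finally have "word_eq R (zpow w e @ syllable_word w D y)
      (syllable_word w D (cons_syllable True (s mod int p) r) @ zpow (wpow w p) (s div int p))"
    by (simp add: syllable_word_cons_syllable)
  moreover have "normal_syllables p (cons_syllable True (s mod int p) r)"
    unfolding normal_syllables_def using r assms(1)
    by (intro reduced_syllables_cons_syllable) (auto simp: order.not_eq_order_implies_strict)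
  ultimately show ?thesis using that by blast
qed

lemma normal_form_step_D:
  assumes "normal_syllables p y"
  obtains y' k where "normal_syllables p y'"
    "word_eq R (zpow D e @ syllable_word w D y) (syllable_word w D y' @ zpow D k)"
proof -
  obtain j r where split: "head_split False y = (j, r)" by (cases "head_split False y")
  note r = reduced_syllables_head_split[OF assms[unfolded normal_syllables_def] split]
  have "word_eq R (zpow D e @ syllable_word w D y) (zpow D (e + j) @ syllable_word w D r)"
    using word_eq_append_cong[OF word_eq_zpow_add, where x="[]"]
    by (subst r(1)) (simp add: syllable_word_cons_syllable)
  show ?thesis
  proof (cases "r = []")
    case True
    show ?thesis
      by (rule that[of "[]" "e + j"]) (use \<open>word_eq R _ _\<close> True in \<open>simp_all add: normal_syllables_def\<close>)
  next
    case False
    have "normal_syllables p (cons_syllable False (e + j) r)"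
      unfolding normal_syllables_def using r False by (intro reduced_syllables_cons_syllable) auto
    then show ?thesis
      by (rule that[of _ 0]) (use \<open>word_eq R _ _\<close> in \<open>simp add: syllable_word_cons_syllable\<close>)
  qed
qed

lemma normal_form_step:
  assumes "0 < p" "commutes R (wpow w p) D" "normal_syllables p y"
    and "u \<in> {w, wpow w p, D} \<union> inv_word ` {w, wpow w p, D}"
  obtains y' hs where "normal_syllables p y'" "set hs \<subseteq> {wpow w p, D} \<union> inv_word ` {wpow w p, D}"
    "word_eq R (u @ syllable_word w D y) (syllable_word w D y' @ concat hs)"
proof -
  have "u \<in> zpow w ` {1, - 1, int p, - int p} \<union> zpow D ` {1, - 1}"
    using assms(1,4) by (auto simp: zpow_def inv_word_wpow)
  then have "(\<exists>e. u = zpow w e) \<or> (\<exists>e. u = zpow D e)"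
    by blast
  then show ?thesis
  proof (elim disjE exE)
    fix e assume u: "u = zpow w e"
    obtain y' k where y': "normal_syllables p y'"
      "word_eq R (zpow w e @ syllable_word w D y) (syllable_word w D y' @ zpow (wpow w p) k)"
      using normal_form_step_w[OF assms(1-3)] .
    obtain hs where hs: "set hs \<subseteq> {wpow w p} \<union> inv_word ` {wpow w p}" "zpow (wpow w p) k = concat hs"
      by (rule zpow_as_concat)
    show ?thesis
      by (rule that[OF y'(1), of hs]) (use u y'(2) hs in auto)
  next
    fix e assume u: "u = zpow D e"
    obtain y' k where y': "normal_syllables p y'"
      "word_eq R (zpow D e @ syllable_word w D y) (syllable_word w D y' @ zpow D k)"
      using normal_form_step_D[OF assms(3)] .
    obtain hs where hs: "set hs \<subseteq> {D} \<union> inv_word ` {D}" "zpow D k = concat hs"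
      by (rule zpow_as_concat)
    show ?thesis
      by (rule that[OF y'(1), of hs]) (use u y'(2) hs in auto)
  qed
qed

lemma normal_form:
  assumes "0 < p" "commutes R (wpow w p) D" "in_subgroup R {w, wpow w p, D} g"
  obtains y hs where "normal_syllables p y" "set hs \<subseteq> {wpow w p, D} \<union> inv_word ` {wpow w p, D}"
    "word_eq R g (syllable_word w D y @ concat hs)"
proof -
  let ?H = "{wpow w p, D} \<union> inv_word ` {wpow w p, D}"
  obtain ws where ws: "set ws \<subseteq> {w, wpow w p, D} \<union> inv_word ` {w, wpow w p, D}" "word_eq R g (concat ws)"
    using assms(3) unfolding in_subgroup_def by blast
  have "\<exists>y hs. normal_syllables p y \<and> set hs \<subseteq> ?H \<and> word_eq R (concat ws) (syllable_word w D y @ concat hs)"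
    using ws(1)
  proof (induct ws)
    case Nil
    have "normal_syllables p []" by (simp add: normal_syllables_def)
    then show ?case using word_eq.refl[of R "[]"] by (intro exI[of _ "[]"]) simp
  next
    case (Cons u ws)
    then obtain y hs where y: "normal_syllables p y" "set hs \<subseteq> ?H"
      "word_eq R (concat ws) (syllable_word w D y @ concat hs)" by auto
    obtain y' hs' where y': "normal_syllables p y'" "set hs' \<subseteq> ?H"
      "word_eq R (u @ syllable_word w D y) (syllable_word w D y' @ concat hs')"
      using normal_form_step[OF assms(1,2) y(1)] Cons(2) by auto
    have "word_eq R (u @ concat ws) (u @ syllable_word w D y @ concat hs)"
      using word_eq_append_cong[OF y(3), of u "[]"] by simp
    also have "word_eq R \<dots> (syllable_word w D y' @ concat (hs' @ hs))"
      using word_eq_append_cong[OF y'(3), of "[]" "concat hs"] by simp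
    finally show ?case
      using y(2) y'(1,2) by (intro exI[of _ y'] exI[of _ "hs' @ hs"]) auto
  qed
  then obtain y hs where "normal_syllables p y" "set hs \<subseteq> ?H"
    "word_eq R (concat ws) (syllable_word w D y @ concat hs)" by blast
  with ws(2) show ?thesis by (meson that word_eq.trans)
qed

section \<open>Cosets of a cyclic factor in a free product of two cyclic groups\<close>

text \<open>For orders od GA, od GB, the reduced forms of the left cosets of the factor generated by X;
  coset_mult od X g e multiplies a coset on the left by g^e, and coset_act lets words act
  letter by letter.\<close>

definition coset_syllables :: "(gen \<Rightarrow> int) \<Rightarrow> gen \<Rightarrow> (gen \<times> int) list \<Rightarrow> bool" where
  "coset_syllables od X = reduced_syllables (\<lambda>g e. 0 < e \<and> e < od g) (\<lambda>g. g \<noteq> X)"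

definition coset_mult :: "(gen \<Rightarrow> int) \<Rightarrow> gen \<Rightarrow> gen \<Rightarrow> int \<Rightarrow> (gen \<times> int) list \<Rightarrow> (gen \<times> int) list" where
  "coset_mult od X g e z =
     (case head_split g z of (f, r) \<Rightarrow> if r = [] \<and> g = X then [] else cons_syllable g ((e + f) mod od g) r)"

definition coset_act :: "(gen \<Rightarrow> int) \<Rightarrow> gen \<Rightarrow> word \<Rightarrow> (gen \<times> int) list \<Rightarrow> (gen \<times> int) list" where
  "coset_act od X w = foldr (\<lambda>(g, i). coset_mult od X g (if i then - 1 else 1)) w"

lemma coset_act_append: "coset_act od X (u @ v) z = coset_act od X u (coset_act od X v z)"
  by (simp add: coset_act_def)

lemma coset_mult_Nil_base: "coset_mult od X X e [] = []"
  by (simp add: coset_mult_def head_split_def starts_with_def)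

context
  fixes od :: "gen \<Rightarrow> int" and X :: gen
  assumes od_pos: "\<And>g. 0 < od g"
begin

lemma coset_syllables_coset_mult:
  assumes "coset_syllables od X z"
  shows "coset_syllables od X (coset_mult od X g e z)"
proof -
  obtain f r where split: "head_split g z = (f, r)" by (cases "head_split g z")
  note r = reduced_syllables_head_split[OF assms[unfolded coset_syllables_def] split]
  have "0 \<le> (e + f) mod od g" "(e + f) mod od g < od g"
    using od_pos[of g] by simp_all
  then show ?thesis
    using r(2,3) split unfolding coset_mult_def coset_syllables_def
    by (auto intro: reduced_syllables_cons_syllable simp: order_neq_le_trans)
qed

lemma coset_mult_mult:
  assumes "coset_syllables od X z"
  shows "coset_mult od X g e (coset_mult od X g e' z) = coset_mult od X g (e + e') z"
proof -
  obtain f r where split: "head_split g z = (f, r)" by (cases "head_split g z")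
  note r = reduced_syllables_head_split[OF assms[unfolded coset_syllables_def] split]
  show ?thesis
  proof (cases "r = [] \<and> g = X")
    case True
    then show ?thesis using split by (simp add: coset_mult_def head_split_def starts_with_def)
  next
    case False
    then show ?thesis
      using split head_split_cons_syllable[OF r(3)]
      by (auto simp: coset_mult_def mod_add_right_eq ac_simps)
  qed
qed

lemma coset_mult_multiple_of_order:
  assumes "coset_syllables od X z" "od g dvd e"
  shows "coset_mult od X g e z = z"
proof -
  obtain f r where split: "head_split g z = (f, r)" by (cases "head_split g z")
  note r = reduced_syllables_head_split[OF assms(1)[unfolded coset_syllables_def] split]
  have "(e + f) mod od g = f"
    using assms(2) r(4) by (cases "f = 0") (auto simp: mod_add_left_eq[symmetric])
  moreover have "z = []" if "r = []" "g = X"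
    using r(1,4) that by (cases "f = 0") (auto simp: cons_syllable_def)
  ultimately show ?thesis
    using split r(1) by (auto simp: coset_mult_def)
qed

lemma coset_mult_new_syllable:
  assumes "coset_syllables od X z" "\<not> starts_with g z" "z = [] \<Longrightarrow> g \<noteq> X" "\<not> od g dvd e"
  shows "coset_mult od X g e z = (g, e mod od g) # z"
  using assms by (simp add: coset_mult_def head_split_def cons_syllable_def dvd_eq_mod_eq_0)

lemma coset_syllables_coset_act: "coset_syllables od X z \<Longrightarrow> coset_syllables od X (coset_act od X u z)"
  by (induct u) (auto simp: coset_act_def coset_syllables_coset_mult)

lemma coset_act_replicate:
  assumes "coset_syllables od X z"
  shows "coset_act od X (replicate k (g, i)) z = coset_mult od X g (if i then - int k else int k) z"
proof (induct k)
  case 0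
  then show ?case using coset_mult_multiple_of_order[OF assms] by (simp add: coset_act_def)
next
  case (Suc k)
  then show ?case
    using coset_mult_mult[OF coset_syllables_coset_act[OF assms, of "replicate k (g, i)"]]
    by (simp add: coset_act_def coset_mult_mult[OF assms] add.commute)
qed

lemma coset_act_inv_word: "coset_syllables od X z \<Longrightarrow> coset_act od X (inv_word u) (coset_act od X u z) = z"
proof (induct u arbitrary: z)
  case (Cons x u)
  obtain g i where x: "x = (g, i)" by (cases x)
  have "coset_act od X (inv_word (x # u)) (coset_act od X (x # u) z)
      = coset_act od X (inv_word u) (coset_mult od X g (if i then 1 else - 1) (coset_mult od X g (if i then - 1 else 1) (coset_act od X u z)))"
    by (simp add: coset_act_append x inv_letter_def) (simp add: coset_act_def)
  also have "\<dots> = coset_act od X (inv_word u) (coset_act od X u z)"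
    using coset_mult_mult coset_mult_multiple_of_order coset_syllables_coset_act[OF Cons.prems] by simp
  also have "\<dots> = z" using Cons by simp
  finally show ?case .
qed (simp add: coset_act_def)

definition acts_trivially :: "word \<Rightarrow> bool" where
  "acts_trivially u \<longleftrightarrow> (\<forall>z. coset_syllables od X z \<longrightarrow> coset_act od X u z = z)"

lemma coset_act_word_eq:
  assumes "word_eq R u v" "\<forall>r\<in>R. acts_trivially r" "coset_syllables od X z"
  shows "coset_act od X u z = coset_act od X v z"
  using assms
proof (induct rule: word_eq.induct)
  case (cancel u x v)
  then show ?case
    using coset_act_inv_word[OF coset_syllables_coset_act[OF cancel(2)], of "[inv_letter x]" v]
    by (simp add: coset_act_def)
next
  case (relator r u v)
  then show ?case
    using coset_syllables_coset_act unfolding acts_trivially_def by (simp add: coset_act_append)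
qed auto

lemma acts_trivially_inv_word: "acts_trivially u \<Longrightarrow> acts_trivially (inv_word u)"
  unfolding acts_trivially_def by (metis coset_act_inv_word)

lemma acts_trivially_wcomm: "acts_trivially u \<or> acts_trivially v \<Longrightarrow> acts_trivially (wcomm u v)"
  using acts_trivially_inv_word
  unfolding acts_trivially_def wcomm_def by (auto simp: coset_act_append coset_act_inv_word coset_syllables_coset_act)

lemma acts_trivially_replicate: "od g dvd int k \<Longrightarrow> acts_trivially (replicate k (g, False))"
  by (simp add: acts_trivially_def coset_act_replicate coset_mult_multiple_of_order)

lemma coset_act_concat_base:
  assumes "set us \<subseteq> S \<union> inv_word ` S" "\<forall>u\<in>S. coset_act od X u [] = []"
  shows "coset_act od X (concat us) [] = []"
  using assms(1)
proof (induct us)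
  case (Cons u us)
  have "coset_act od X u [] = []"
    using Cons.prems assms(2) coset_act_inv_word[of "[]"] by (auto simp: coset_syllables_def) metis
  then show ?case using Cons by (simp add: coset_act_append)
qed (simp add: coset_act_def)

lemma not_in_subgroup_if_moves_base:
  assumes "\<forall>r\<in>R. acts_trivially r" "\<forall>u\<in>S. coset_act od X u [] = []" "coset_act od X g [] \<noteq> []"
  shows "\<not> in_subgroup R S g"
proof
  assume "in_subgroup R S g"
  then obtain us where "set us \<subseteq> S \<union> inv_word ` S" "word_eq R g (concat us)"
    unfolding in_subgroup_def by blast
  then show False
    using assms coset_act_concat_base coset_act_word_eq[of R g "concat us" "[]"] by (simp add: coset_syllables_def)
qed

lemma coset_act_zpow_replicate:
  assumes "coset_syllables od X z"
  shows "coset_act od X (zpow (replicate q (g, False)) k) z = coset_mult od X g (int q * k) z"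
proof -
  have "zpow (replicate q (g, False)) k =
      (if 0 \<le> k then replicate (q * nat k) (g, False) else replicate (q * nat (- k)) (g, True))"
    by (simp add: zpow_def inv_word_wpow inv_letter_def flip: wpow_single wpow_mult)
  then show ?thesis
    by (simp add: coset_act_replicate[OF assms] nat_mult_distrib)
qed

lemma coset_act_zpow_new_syllable:
  assumes "coset_syllables od X z" "\<not> starts_with g z" "z = [] \<Longrightarrow> g \<noteq> X" "\<not> od g dvd int q * k"
  shows "coset_syllables od X (coset_act od X (zpow (replicate q (g, False)) k) z)
    \<and> starts_with g (coset_act od X (zpow (replicate q (g, False)) k) z)"
  unfolding coset_act_zpow_replicate[OF assms(1)]
  using coset_mult_new_syllable[OF assms] coset_syllables_coset_mult[OF assms(1), of g "int q * k"]
  by (simp add: starts_with_def)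

lemma coset_act_syllable_word:
  fixes lg :: gen and p q t :: nat
  defines "W \<equiv> syllable_word [(lg, False)] (replicate q (X, False))"
  assumes "lg \<noteq> X" "od lg = int p" "od X = int q * int t"
    and "normal_syllables p y" "y \<noteq> []" "\<forall>(b, j)\<in>set y. \<not> int t dvd j"
  shows "coset_syllables od X (coset_act od X (W y) [])
    \<and> starts_with (if fst (hd y) then lg else X) (coset_act od X (W y) [])"
  using assms(5-7)
proof (induct y)
  case (Cons x r)
  obtain b k where x: "x = (b, k)" by (cases x)
  define gb where "gb = (if b then lg else X)"
  define mb where "mb = (if b then 1 else q)"
  define z where "z = coset_act od X (W r) []"
  have k: "b \<Longrightarrow> 0 < k \<and> k < int p" "\<not> starts_with b r" "r = [] \<Longrightarrow> b"
    and r: "normal_syllables p r"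
    using Cons.prems(1) by (simp_all add: x normal_syllables_def reduced_syllables_Cons)
  have z: "coset_syllables od X z"
    unfolding z_def by (rule coset_syllables_coset_act) (simp add: coset_syllables_def)
  have fresh: "\<not> starts_with gb z \<and> (z = [] \<longrightarrow> gb \<noteq> X)"
  proof (cases "r = []")
    case True
    then show ?thesis
      using k(3) assms(2) by (simp add: z_def gb_def coset_act_def starts_with_def W_def)
  next
    case False
    then have "starts_with (if fst (hd r) then lg else X) z"
      using Cons r unfolding z_def by auto
    then show ?thesis
      using k(2) False assms(2) by (auto simp: gb_def starts_with_def)
  qed
  have "\<not> od gb dvd int mb * k"
  proof (cases b)
    case True
    then show ?thesis using k(1) assms(3) by (simp add: gb_def mb_def zdvd_not_zless)
  next
    case False
    then have "\<not> int t dvd k" using Cons.prems(3) x by auto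
    then show ?thesis using False assms(4) od_pos[of X] by (auto simp: gb_def mb_def zero_less_mult_iff)
  qed
  then have "coset_syllables od X (coset_act od X (zpow (replicate mb (gb, False)) k) z)
      \<and> starts_with gb (coset_act od X (zpow (replicate mb (gb, False)) k) z)"
    using coset_act_zpow_new_syllable[OF z] fresh by blast
  moreover have "W (x # r) = zpow (replicate mb (gb, False)) k @ W r"
    by (simp add: W_def x gb_def mb_def syllable_word_def)
  ultimately show ?case
    by (simp add: coset_act_append x gb_def flip: z_def)
qed simp

lemma rels_Gt_acts_trivially:
  assumes "od GA dvd int (m * t)" "od GB dvd int (n * t)" "od GA dvd int m \<or> od GB dvd int n"
  shows "\<forall>r\<in>rels_Gt m n t. acts_trivially r"
proof -
  have "wc m = replicate m (GA, False)" "wd n = replicate n (GB, False)"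
    "wpow wa (m * t) = replicate (m * t) (GA, False)" "wpow wb (n * t) = replicate (n * t) (GB, False)"
    by (simp_all add: wc_def wd_def wa_def wb_def)
  then show ?thesis
    using assms acts_trivially_replicate acts_trivially_wcomm
    by (auto simp: rels_Gt_def)
qed

end

section \<open>Separating g from H in the quotients\<close>

lemma not_in_subgroup_for_large_t:
  fixes lg og :: gen and p q :: nat
  defines "C \<equiv> replicate p (lg, False)" and "D \<equiv> replicate q (og, False)"
  assumes lg_og: "lg \<noteq> og" and p: "1 < p" and q: "0 < q" and comm: "commutes R C D"
    and in_A: "in_subgroup R {[(lg, False)], C, D} g" and not_in_H: "\<not> in_subgroup R {C, D} g"
  obtains t0 :: nat where "1 < t0"
    "\<And>t Rt. t0 \<le> t \<Longrightarrow> R \<subseteq> Rt \<Longrightarrow>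
       \<forall>r\<in>Rt. acts_trivially (\<lambda>x. if x = lg then int p else int q * int t) og r \<Longrightarrow>
       \<not> in_subgroup Rt {C, D} g"
proof -
  have C: "C = wpow [(lg, False)] p" by (simp add: C_def)
  obtain y hs where y: "normal_syllables p y" "set hs \<subseteq> {C, D} \<union> inv_word ` {C, D}"
    and g: "word_eq R g (syllable_word [(lg, False)] D y @ concat hs)"
    by (rule normal_form[of p R "[(lg, False)]" D g, folded C]) (use p comm in_A in auto)
  have "y \<noteq> []"
    using not_in_H y(2) g unfolding in_subgroup_def by auto
  \<comment> \<open>t0 exceeds every D-exponent, so t divides none of them.\<close>
  define t0 where "t0 = 2 + (\<Sum>(c, e)\<leftarrow>y. nat \<bar>e\<bar>)"
  show ?thesis
  proof (rule that)
    show "1 < t0" by (simp add: t0_def)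
  next
    fix t Rt
    assume t: "t0 \<le> t" and Rt: "R \<subseteq> Rt" "\<forall>r\<in>Rt. acts_trivially (\<lambda>x. if x = lg then int p else int q * int t) og r"
    define od where "od = (\<lambda>x. if x = lg then int p else int q * int t)"
    have od_pos: "\<And>x. 0 < od x" using t p q by (simp add: od_def t0_def)
    have "\<forall>(b, j)\<in>set y. \<not> int t dvd j"
      using reduced_syllables_not_dvd[OF y(1)[unfolded normal_syllables_def]] t by (auto simp: t0_def)
    then have moves: "coset_act od og (syllable_word [(lg, False)] D y) [] \<noteq> []"
      using coset_act_syllable_word[where od = od and X = og and lg = lg and p = p and q = q and t = t,
          OF od_pos lg_og _ _ y(1) \<open>y \<noteq> []\<close>] lg_og
      by (fastforce simp: od_def D_def starts_with_def)
    have H_fixes: "\<forall>u\<in>{C, D}. coset_act od og u [] = []"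
      using coset_act_replicate[OF od_pos, where z = "[]"] coset_mult_multiple_of_order[OF od_pos, where z = "[]"]
      by (auto simp: C_def D_def od_def coset_syllables_def coset_mult_Nil_base)
    have Rt_trivial: "\<forall>r\<in>Rt. acts_trivially od og r"
      using Rt(2) by (simp add: od_def)
    have "coset_act od og g [] = coset_act od og (syllable_word [(lg, False)] D y @ concat hs) []"
      by (rule coset_act_word_eq[OF od_pos word_eq_mono[OF g Rt(1)] Rt_trivial]) (simp add: coset_syllables_def)
    also have "\<dots> = coset_act od og (syllable_word [(lg, False)] D y) []"
      using coset_act_concat_base[OF od_pos y(2) H_fixes] by (simp add: coset_act_append)
    finally have "coset_act od og g [] \<noteq> []"
      using moves by simp
    then show "\<not> in_subgroup Rt {C, D} g"
      by (rule not_in_subgroup_if_moves_base[OF od_pos Rt_trivial H_fixes])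
  qed
qed

lemma not_in_subgroup_rels_Gt:
  fixes lg og :: gen and p q :: nat
  defines "C \<equiv> replicate p (lg, False)" and "D \<equiv> replicate q (og, False)"
  assumes gens: "lg \<noteq> og" "1 < p" "0 < q" and H: "{wc m, wd n} = {C, D}"
    and comm: "commutes (rels_G m n) C D"
    and in_A: "in_subgroup (rels_G m n) {[(lg, False)], C, D} g"
    and not_in_H: "\<not> in_subgroup (rels_G m n) {C, D} g"
    and relators: "\<And>t. 0 < t \<Longrightarrow>
      \<forall>r\<in>rels_Gt m n t. acts_trivially (\<lambda>x. if x = lg then int p else int q * int t) og r"
  shows "\<exists>t0::nat. t0 > 1 \<and> (\<forall>t. t > 0 \<and> t0 dvd t \<longrightarrow> \<not> in_subgroup (rels_Gt m n t) {wc m, wd n} g)"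
proof -
  obtain t0 where "1 < t0" and large_t: "\<And>t Rt. t0 \<le> t \<Longrightarrow> rels_G m n \<subseteq> Rt \<Longrightarrow>
      \<forall>r\<in>Rt. acts_trivially (\<lambda>x. if x = lg then int p else int q * int t) og r \<Longrightarrow>
      \<not> in_subgroup Rt {C, D} g"
    by (rule not_in_subgroup_for_large_t[of lg og p q "rels_G m n" g])
      (use gens comm in_A not_in_H in \<open>simp_all add: C_def D_def\<close>)
  have "\<not> in_subgroup (rels_Gt m n t) {wc m, wd n} g" if "0 < t" "t0 dvd t" for t
    using large_t[OF dvd_imp_le[OF that(2,1)]] relators[OF that(1)] H
    by (auto simp: rels_G_def rels_Gt_def)
  then show ?thesis using \<open>1 < t0\<close> by blast
qed

theorem proposition2p4:
  fixes m n :: nat and g :: word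
  assumes "m > 1" and "n > 1"
    and "in_subgroup (rels_G m n) {wa, wc m, wd n} g
         \<or> in_subgroup (rels_G m n) {wb, wc m, wd n} g"
    and "\<not> in_subgroup (rels_G m n) {wc m, wd n} g"
  shows "\<exists>t0::nat. t0 > 1 \<and>
           (\<forall>t::nat. t > 0 \<and> t0 dvd t \<longrightarrow>
              \<not> in_subgroup (rels_Gt m n t) {wc m, wd n} g)"
proof -
  have comm: "commutes (rels_G m n) (wc m) (wd n)"
    by (rule commutes_of_relator) (simp add: rels_G_def)
  have wc: "wc m = replicate m (GA, False)" and wd: "wd n = replicate n (GB, False)"
    by (simp_all add: wc_def wd_def wa_def wb_def)
  from assms(3) show ?thesis
  proof
    assume "in_subgroup (rels_G m n) {wa, wc m, wd n} g"
    moreover have "\<forall>r\<in>rels_Gt m n t. acts_trivially (\<lambda>x. if x = GA then int m else int n * int t) GB r"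
      if "0 < t" for t
      by (rule rels_Gt_acts_trivially) (use assms(1,2) that in auto)
    ultimately show ?thesis
      using assms(1,2,4) comm by (intro not_in_subgroup_rels_Gt[of GA GB m n]) (auto simp: wc wd wa_def)
  next
    assume "in_subgroup (rels_G m n) {wb, wc m, wd n} g"
    moreover have "\<forall>r\<in>rels_Gt m n t. acts_trivially (\<lambda>x. if x = GB then int n else int m * int t) GA r"
      if "0 < t" for t
      by (rule rels_Gt_acts_trivially) (use assms(1,2) that in auto)
    ultimately show ?thesis
      using assms(1,2,4) commutes_sym[OF comm]
      by (intro not_in_subgroup_rels_Gt[of GB GA n m]) (auto simp: wc wd wb_def insert_commute)
  qed
qed

end
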